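(* Let $n\ge 1$, $m\in\mathbb Z_+^n$, $c_\alpha\in\mathbb C$ for $0\le\alpha\le m$ (with $c_\alpha=0$ otherwise), $P(z)=\sum_{0\le\alpha\le m}c_\alpha z^\alpha$, $X_0=\{\tau\in\mathbb Z^n:\tau\ge0,\ \tau\not\ge m\}$, and $\varphi:X_0\to\mathbb C$, extended by zero to $\mathbb Z_+^n\setminus X_0$. Let $f:\mathbb Z_+^n\to\mathbb C$ satisfy $\sum_{0\le\alpha\le m}c_\alpha f(x+\alpha)=0$ for all $x\in\mathbb Z_+^n$ and $f=\varphi$ on $X_0$, and assume $F(z)=\sum_{x\ge0}f(x)/z^{x+I}$ converges in some neighborhood of infinity. Then in that neighborhood $$P(z)F(z)=\sum_J\sum_{\tau\in\Gamma_J}\Phi_{\tau,J}(z)\,P_\tau(z),\qquad\text{where } P_\tau(z)=\sum_{\alpha\le m,\ \alpha\not\le\tau}c_\alpha z^\alpha,$$ the outer sum running over all $J\in\{0,1\}^n$.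
   Context: Notation: $x\le y$ is componentwise; $x\not\ge y$ (resp. $x\not\le y$) means $x\ge y$ (resp. $x\le y$) fails; $I=(1,\dots,1)$; $z^x=\prod z_k^{x_k}$. $\Pi_m=\{x\in\mathbb Z^n:0\le x_k\le m_k\ \forall k\}$. For $J=(j_1,\dots,j_n)\in\{0,1\}^n$, $\Gamma_J=\{x\in\Pi_m: x_k=m_k \text{ if } j_k=1,\ x_k<m_k \text{ if } j_k=0\}$; these sets partition $\Pi_m$. For $y\in\mathbb Z_+^n$, $Jy=(j_1y_1,\dots,j_ny_n)$. For $\tau\in\Gamma_J$, $\Phi_{\tau,J}(z)=\sum_{x\in\tau+J\mathbb Z_+^n}\varphi(x)/z^{x+I}$, i.e. the sum of $\varphi(\tau+Jy)/z^{\tau+Jy+I}$ over the distinct points $\tau+Jy$, $y\in\mathbb Z_+^n$ (equivalently over $y\ge0$ with $y_k=0$ whenever $j_k=0$). *)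

theory Defs
  imports "HOL-Analysis.Analysis"
begin

text \<open>A vector J in {0,1}^n is represented by the set of indices k with j_k = 1.\<close>

definition mpow :: "('n::finite \<Rightarrow> complex) \<Rightarrow> ('n \<Rightarrow> nat) \<Rightarrow> complex" where
  "mpow z x = (\<Prod>k\<in>UNIV. z k ^ x k)"

definition X0 :: "('n::finite \<Rightarrow> nat) \<Rightarrow> ('n \<Rightarrow> nat) set" where
  "X0 m = {\<tau>. \<not> (m \<le> \<tau>)}"

definition Gamma :: "('n::finite \<Rightarrow> nat) \<Rightarrow> 'n set \<Rightarrow> ('n \<Rightarrow> nat) set" where
  "Gamma m J = {x. x \<le> m \<and> (\<forall>k. (k \<in> J \<longrightarrow> x k = m k) \<and> (k \<notin> J \<longrightarrow> x k < m k))}"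

definition Phi :: "(('n::finite \<Rightarrow> nat) \<Rightarrow> complex) \<Rightarrow> ('n \<Rightarrow> nat) \<Rightarrow> 'n set
    \<Rightarrow> ('n \<Rightarrow> complex) \<Rightarrow> complex" where
  "Phi \<phi> \<tau> J z = infsum (\<lambda>x. \<phi> x / mpow z (\<lambda>k. x k + 1))
      {x. \<exists>y::'n \<Rightarrow> nat. x = (\<lambda>k. \<tau> k + (if k \<in> J then y k else 0))}"

definition Ppoly :: "(('n::finite \<Rightarrow> nat) \<Rightarrow> complex) \<Rightarrow> ('n \<Rightarrow> nat) \<Rightarrow> ('n \<Rightarrow> complex) \<Rightarrow> complex" where
  "Ppoly c m z = (\<Sum>\<alpha>\<in>{\<alpha>. \<alpha> \<le> m}. c \<alpha> * mpow z \<alpha>)"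

definition Ptau :: "(('n::finite \<Rightarrow> nat) \<Rightarrow> complex) \<Rightarrow> ('n \<Rightarrow> nat) \<Rightarrow> ('n \<Rightarrow> nat)
    \<Rightarrow> ('n \<Rightarrow> complex) \<Rightarrow> complex" where
  "Ptau c m \<tau> z = (\<Sum>\<alpha>\<in>{\<alpha>. \<alpha> \<le> m \<and> \<not> (\<alpha> \<le> \<tau>)}. c \<alpha> * mpow z \<alpha>)"

definition genF :: "(('n::finite \<Rightarrow> nat) \<Rightarrow> complex) \<Rightarrow> ('n \<Rightarrow> complex) \<Rightarrow> complex" where
  "genF f z = infsum (\<lambda>x. f x / mpow z (\<lambda>k. x k + 1)) UNIV"

end

theory Submission
  imports Defs
begin

text \<open>Multiplying the generating series by P splits each term c(\<alpha>) z^\<alpha> f(x) / z^(x+I)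
  according to whether \<alpha> \<le> x. After the shift x = y + \<alpha>, the terms with \<alpha> \<le> x form the
  series of the recurrence and sum to zero. The remaining terms give the series of
  f(x) P_x(z) / z^(x+I), in which P_x = 0 unless x \<in> X_0, where f = \<phi>. Finally the
  cones \<tau> + J Z_+^n with \<tau> \<in> \<Gamma>_J partition Z_+^n, and P_x = P_\<tau> on each cone.\<close>

lemma has_sum_sum:
  fixes f :: "'i \<Rightarrow> 'a \<Rightarrow> 'b::topological_comm_monoid_add"
  assumes "finite I" "\<And>i. i \<in> I \<Longrightarrow> (f i has_sum s i) A"
  shows "((\<lambda>x. \<Sum>i\<in>I. f i x) has_sum (\<Sum>i\<in>I. s i)) A"
  using assms by (induction I rule: finite_induct) (simp_all add: has_sum_add)

lemma finite_le_fun: "finite {x::'n::finite \<Rightarrow> nat. x \<le> m}"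
proof -
  have "{x::'n \<Rightarrow> nat. x \<le> m} = PiE UNIV (\<lambda>k. {..m k})"
    by (auto simp: le_fun_def PiE_UNIV_domain)
  then show ?thesis
    by (simp add: finite_PiE)
qed

lemma has_sum_shift_iff:
  fixes h :: "('n \<Rightarrow> nat) \<Rightarrow> 'a::{comm_monoid_add, topological_space}"
  shows "((\<lambda>y. h (\<lambda>k. y k + \<alpha> k)) has_sum s) UNIV \<longleftrightarrow>
         ((\<lambda>x. if \<alpha> \<le> x then h x else 0) has_sum s) UNIV"
proof -
  have "((\<lambda>y. h (\<lambda>k. y k + \<alpha> k)) has_sum s) UNIV \<longleftrightarrow> (h has_sum s) {x. \<alpha> \<le> x}"
    by (rule has_sum_reindex_bij_witness[where i = "\<lambda>x k. x k - \<alpha> k"])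
       (auto simp: le_fun_def fun_eq_iff)
  also have "\<dots> \<longleftrightarrow> ((\<lambda>x. if \<alpha> \<le> x then h x else 0) has_sum s) UNIV"
    by (rule has_sum_cong_neutral) auto
  finally show ?thesis .
qed

lemma mpow_add: "mpow z (\<lambda>k. a k + b k) = mpow z a * mpow z b"
  unfolding mpow_def by (simp add: power_add prod.distrib)

lemma mpow_eq_0_if_positive:
  assumes "z k = 0" "\<And>k. 0 < b k"
  shows "mpow z b = 0"
  unfolding mpow_def using assms by (intro prod_zero) auto

text \<open>No hypothesis z k \<noteq> 0 is needed: if some z k = 0, both sides vanish since w / 0 = 0.\<close>

lemma mpow_mult_divide_shift:
  assumes "\<And>k. 0 < b k"
  shows "mpow z a * (w / mpow z (\<lambda>k. a k + b k)) = w / mpow z b"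
proof (cases "\<exists>k. z k = 0")
  case True
  then obtain k where "z k = 0" by blast
  with assms have "mpow z b = 0" "mpow z (\<lambda>k. a k + b k) = 0"
    using mpow_eq_0_if_positive[of z k b] mpow_eq_0_if_positive[of z k "\<lambda>k. a k + b k"]
    by (simp_all add: add_pos_nonneg)
  then show ?thesis by simp
next
  case False
  then have "mpow z a \<noteq> 0"
    by (simp add: mpow_def)
  then show ?thesis
    by (simp add: mpow_add)
qed

lemma Ppoly_eq_Ptau_plus:
  "Ppoly c m z = Ptau c m x z + (\<Sum>\<alpha>\<in>{\<alpha>. \<alpha> \<le> m \<and> \<alpha> \<le> x}. c \<alpha> * mpow z \<alpha>)"
proof -
  let ?A = "{\<alpha>. \<alpha> \<le> m \<and> \<not> \<alpha> \<le> x}" and ?B = "{\<alpha>. \<alpha> \<le> m \<and> \<alpha> \<le> x}"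
  have "{\<alpha>. \<alpha> \<le> m} = ?A \<union> ?B"
    by blast
  then have "Ppoly c m z = (\<Sum>\<alpha>\<in>?A \<union> ?B. c \<alpha> * mpow z \<alpha>)"
    unfolding Ppoly_def by (rule arg_cong)
  also have "\<dots> = (\<Sum>\<alpha>\<in>?A. c \<alpha> * mpow z \<alpha>) + (\<Sum>\<alpha>\<in>?B. c \<alpha> * mpow z \<alpha>)"
    by (rule sum.union_disjoint) (auto intro: rev_finite_subset[OF finite_le_fun])
  finally show ?thesis
    unfolding Ptau_def .
qed

lemma Ptau_eq_0_if_ge:
  assumes "m \<le> x"
  shows "Ptau c m x z = 0"
proof -
  have "{\<alpha>. \<alpha> \<le> m \<and> \<not> \<alpha> \<le> x} = {}"
    using assms order_trans by blast
  then show ?thesis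
    unfolding Ptau_def by (simp only: sum.empty)
qed

lemma has_sum_shifted_series:
  fixes f :: "('n::finite \<Rightarrow> nat) \<Rightarrow> complex" and z :: "'n \<Rightarrow> complex" and \<alpha> :: "'n \<Rightarrow> nat"
  defines "G \<equiv> \<lambda>x. if \<alpha> \<le> x then mpow z \<alpha> * (f x / mpow z (\<lambda>k. x k + 1)) else 0"
  assumes summable: "(\<lambda>x. f x / mpow z (\<lambda>k. x k + 1)) summable_on UNIV"
  shows "(G has_sum infsum G UNIV) UNIV"
    and "((\<lambda>y. f (\<lambda>k. y k + \<alpha> k) / mpow z (\<lambda>k. y k + 1)) has_sum infsum G UNIV) UNIV"
proof -
  have "(\<lambda>x. f x / mpow z (\<lambda>k. x k + 1)) summable_on {x. \<alpha> \<le> x}"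
    using summable by (rule summable_on_subset_banach) simp
  then have "(\<lambda>x. mpow z \<alpha> * (f x / mpow z (\<lambda>k. x k + 1))) summable_on {x. \<alpha> \<le> x}"
    by (rule summable_on_cmult_right)
  then have "G summable_on UNIV"
    unfolding G_def by (subst summable_on_cong_neutral[where T = "{x. \<alpha> \<le> x}"]) auto
  then show G_has_sum: "(G has_sum infsum G UNIV) UNIV"
    by simp
  have "G (\<lambda>k. y k + \<alpha> k) = f (\<lambda>k. y k + \<alpha> k) / mpow z (\<lambda>k. y k + 1)" for y
  proof -
    have "(\<lambda>k. y k + \<alpha> k + 1) = (\<lambda>k. \<alpha> k + (y k + 1))"
      by (simp add: fun_eq_iff)
    then have "mpow z \<alpha> * (f (\<lambda>k. y k + \<alpha> k) / mpow z (\<lambda>k. y k + \<alpha> k + 1))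
        = f (\<lambda>k. y k + \<alpha> k) / mpow z (\<lambda>k. y k + 1)"
      by (simp only: mpow_mult_divide_shift zero_less_Suc Suc_eq_plus1)
    then show ?thesis
      unfolding G_def by (simp add: le_fun_def)
  qed
  moreover have "(\<lambda>x. if \<alpha> \<le> x then G x else 0) = G"
    unfolding G_def by auto
  ultimately show "((\<lambda>y. f (\<lambda>k. y k + \<alpha> k) / mpow z (\<lambda>k. y k + 1)) has_sum infsum G UNIV) UNIV"
    using G_has_sum has_sum_shift_iff[of G \<alpha>] by simp
qed

lemma recurrence_terms_has_sum_0:
  fixes c f :: "('n::finite \<Rightarrow> nat) \<Rightarrow> complex"
  assumes rec: "\<And>x. (\<Sum>\<alpha>\<in>{\<alpha>. \<alpha> \<le> m}. c \<alpha> * f (\<lambda>k. x k + \<alpha> k)) = 0"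
    and summable: "(\<lambda>x. f x / mpow z (\<lambda>k. x k + 1)) summable_on UNIV"
  shows "((\<lambda>x. (\<Sum>\<alpha>\<in>{\<alpha>. \<alpha> \<le> m \<and> \<alpha> \<le> x}. c \<alpha> * mpow z \<alpha>) * (f x / mpow z (\<lambda>k. x k + 1)))
           has_sum 0) UNIV"
proof -
  define G where "G \<alpha> x = (if \<alpha> \<le> x then mpow z \<alpha> * (f x / mpow z (\<lambda>k. x k + 1)) else 0)" for \<alpha> x
  define S where "S = (\<Sum>\<alpha>\<in>{\<alpha>. \<alpha> \<le> m}. c \<alpha> * infsum (G \<alpha>) UNIV)"
  have "((\<lambda>y. \<Sum>\<alpha>\<in>{\<alpha>. \<alpha> \<le> m}. c \<alpha> * (f (\<lambda>k. y k + \<alpha> k) / mpow z (\<lambda>k. y k + 1))) has_sum S) UNIV"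
    unfolding S_def G_def
    by (intro has_sum_sum finite_le_fun has_sum_cmult_right has_sum_shifted_series(2) summable)
  moreover have "(\<Sum>\<alpha>\<in>{\<alpha>. \<alpha> \<le> m}. c \<alpha> * (f (\<lambda>k. y k + \<alpha> k) / mpow z (\<lambda>k. y k + 1))) = 0" for y
    using rec[of y] by (simp add: times_divide_eq_right sum_divide_distrib[symmetric])
  ultimately have "((\<lambda>y::'n \<Rightarrow> nat. 0) has_sum S) UNIV"
    by (simp only:)
  then have "S = 0"
    using has_sum_0_simp by (rule has_sum_unique)
  moreover have "((\<lambda>x. \<Sum>\<alpha>\<in>{\<alpha>. \<alpha> \<le> m}. c \<alpha> * G \<alpha> x) has_sum S) UNIV"
    unfolding S_def G_def
    by (intro has_sum_sum finite_le_fun has_sum_cmult_right has_sum_shifted_series(1) summable)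
  moreover have "(\<Sum>\<alpha>\<in>{\<alpha>. \<alpha> \<le> m}. c \<alpha> * G \<alpha> x)
      = (\<Sum>\<alpha>\<in>{\<alpha>. \<alpha> \<le> m \<and> \<alpha> \<le> x}. c \<alpha> * mpow z \<alpha>) * (f x / mpow z (\<lambda>k. x k + 1))" for x
  proof -
    have "(\<Sum>\<alpha>\<in>{\<alpha>. \<alpha> \<le> m}. c \<alpha> * G \<alpha> x)
        = (\<Sum>\<alpha>\<in>{\<alpha>. \<alpha> \<le> m}. if \<alpha> \<le> x then c \<alpha> * (mpow z \<alpha> * (f x / mpow z (\<lambda>k. x k + 1))) else 0)"
      by (intro sum.cong) (simp_all add: G_def)
    also have "\<dots> = (\<Sum>\<alpha>\<in>{\<alpha> \<in> {\<alpha>. \<alpha> \<le> m}. \<alpha> \<le> x}. c \<alpha> * (mpow z \<alpha> * (f x / mpow z (\<lambda>k. x k + 1))))"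
      by (rule sum.inter_filter[OF finite_le_fun, symmetric])
    finally show ?thesis
      by (simp only: mem_Collect_eq sum_distrib_right mult.assoc)
  qed
  ultimately show ?thesis
    by simp
qed

lemma Ppoly_genF_has_sum:
  fixes c \<phi> f :: "('n::finite \<Rightarrow> nat) \<Rightarrow> complex"
  assumes \<phi>_ext: "\<And>x. x \<notin> X0 m \<Longrightarrow> \<phi> x = 0"
    and rec: "\<And>x. (\<Sum>\<alpha>\<in>{\<alpha>. \<alpha> \<le> m}. c \<alpha> * f (\<lambda>k. x k + \<alpha> k)) = 0"
    and init: "\<And>x. x \<in> X0 m \<Longrightarrow> f x = \<phi> x"
    and summable: "(\<lambda>x. f x / mpow z (\<lambda>k. x k + 1)) summable_on UNIV"
  shows "((\<lambda>x. \<phi> x / mpow z (\<lambda>k. x k + 1) * Ptau c m x z) has_sum Ppoly c m z * genF f z) UNIV"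
proof -
  define g where "g x = f x / mpow z (\<lambda>k. x k + 1)" for x
  define Q where "Q x = (\<Sum>\<alpha>\<in>{\<alpha>. \<alpha> \<le> m \<and> \<alpha> \<le> x}. c \<alpha> * mpow z \<alpha>) * g x" for x
  have "((\<lambda>x. Ppoly c m z * g x) has_sum Ppoly c m z * genF f z) UNIV"
    using summable unfolding g_def genF_def by (intro has_sum_cmult_right) simp
  moreover have "((\<lambda>x. - Q x) has_sum 0) UNIV"
    using recurrence_terms_has_sum_0[OF rec summable] by (simp add: has_sum_uminus Q_def g_def)
  ultimately have "((\<lambda>x. Ppoly c m z * g x - Q x) has_sum Ppoly c m z * genF f z) UNIV"
    using has_sum_add by fastforce
  moreover have "Ppoly c m z * g x - Q x = \<phi> x / mpow z (\<lambda>k. x k + 1) * Ptau c m x z" for x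
  proof (cases "x \<in> X0 m")
    case True
    then show ?thesis
      by (simp add: Ppoly_eq_Ptau_plus[of c m z x] Q_def g_def init algebra_simps)
  next
    case False
    then show ?thesis
      by (simp add: Ppoly_eq_Ptau_plus[of c m z x] Q_def \<phi>_ext Ptau_eq_0_if_ge X0_def)
  qed
  ultimately show ?thesis
    by simp
qed

definition cone :: "('n::finite \<Rightarrow> nat) \<Rightarrow> 'n set \<Rightarrow> ('n \<Rightarrow> nat) set" where
  "cone \<tau> J = {x. \<exists>y::'n \<Rightarrow> nat. x = (\<lambda>k. \<tau> k + (if k \<in> J then y k else 0))}"

lemma mem_cone_Gamma_iff:
  "x \<in> cone \<tau> J \<and> \<tau> \<in> Gamma m J \<longleftrightarrow> J = {k. m k \<le> x k} \<and> \<tau> = (\<lambda>k. min (x k) (m k))"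
proof
  assume "x \<in> cone \<tau> J \<and> \<tau> \<in> Gamma m J"
  then obtain y where x: "x = (\<lambda>k. \<tau> k + (if k \<in> J then y k else 0))"
    and \<tau>: "\<And>k. (k \<in> J \<longrightarrow> \<tau> k = m k) \<and> (k \<notin> J \<longrightarrow> \<tau> k < m k)"
    unfolding cone_def Gamma_def by blast
  show "J = {k. m k \<le> x k} \<and> \<tau> = (\<lambda>k. min (x k) (m k))"
    using \<tau> unfolding x by (force simp: fun_eq_iff)
next
  assume "J = {k. m k \<le> x k} \<and> \<tau> = (\<lambda>k. min (x k) (m k))"
  then show "x \<in> cone \<tau> J \<and> \<tau> \<in> Gamma m J"
    unfolding cone_def Gamma_def
    by (auto simp: le_fun_def fun_eq_iff intro!: exI[of _ "\<lambda>k. x k - m k"])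
qed

lemma Ptau_cone:
  assumes "\<tau> \<in> Gamma m J" "x \<in> cone \<tau> J"
  shows "Ptau c m x z = Ptau c m \<tau> z"
proof -
  have "\<tau> = (\<lambda>k. min (x k) (m k))"
    using assms mem_cone_Gamma_iff by blast
  then have "{\<alpha>. \<alpha> \<le> m \<and> \<not> \<alpha> \<le> x} = {\<alpha>. \<alpha> \<le> m \<and> \<not> \<alpha> \<le> \<tau>}"
    by (auto simp: le_fun_def)
  then show ?thesis
    unfolding Ptau_def by simp
qed

lemma sum_infsum_cones:
  fixes h :: "('n::finite \<Rightarrow> nat) \<Rightarrow> 'a::banach"
  assumes "h summable_on UNIV"
  shows "(\<Sum>J\<in>UNIV. \<Sum>\<tau>\<in>Gamma m J. infsum h (cone \<tau> J)) = infsum h UNIV"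
proof -
  let ?P = "Sigma UNIV (Gamma m)"
  have finite_Gamma: "finite (Gamma m J)" for J
    by (rule rev_finite_subset[OF finite_le_fun[of m]]) (auto simp: Gamma_def)
  have disjoint: "cone (snd p) (fst p) \<inter> cone (snd q) (fst q) = {}"
    if "p \<in> ?P" "q \<in> ?P" "p \<noteq> q" for p q
  proof -
    have "p = q" if "x \<in> cone (snd p) (fst p)" "x \<in> cone (snd q) (fst q)" for x
      using that \<open>p \<in> ?P\<close> \<open>q \<in> ?P\<close>
        mem_cone_Gamma_iff[of x "snd p" "fst p" m] mem_cone_Gamma_iff[of x "snd q" "fst q" m]
      by (auto simp: prod_eq_iff mem_Sigma_iff[of "fst p" "snd p", simplified]
          mem_Sigma_iff[of "fst q" "snd q", simplified])
    with \<open>p \<noteq> q\<close> show ?thesis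
      by blast
  qed
  have cover: "x \<in> (\<Union>p\<in>?P. cone (snd p) (fst p))" for x
    using mem_cone_Gamma_iff[of x "\<lambda>k. min (x k) (m k)" "{k. m k \<le> x k}" m] by force
  have "(\<Sum>J\<in>UNIV. \<Sum>\<tau>\<in>Gamma m J. infsum h (cone \<tau> J)) = (\<Sum>p\<in>?P. infsum h (cone (snd p) (fst p)))"
    by (simp add: sum.Sigma finite_Gamma case_prod_unfold)
  also have "\<dots> = infsum h (\<Union>p\<in>?P. cone (snd p) (fst p))"
  proof (rule sum_infsum[OF _ _ disjoint])
    show "finite ?P"
      by (simp add: finite_Gamma)
    show "h summable_on cone (snd p) (fst p)" for p
      using assms by (rule summable_on_subset_banach) simp
  qed
  also have "(\<Union>p\<in>?P. cone (snd p) (fst p)) = UNIV"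
    using cover by blast
  finally show ?thesis .
qed

theorem theorem2:
  fixes m :: "'n::finite \<Rightarrow> nat"
    and c \<phi> f :: "('n \<Rightarrow> nat) \<Rightarrow> complex"
    and R :: real
  assumes c_zero: "\<And>\<alpha>. \<not> (\<alpha> \<le> m) \<Longrightarrow> c \<alpha> = 0"
    and \<phi>_ext: "\<And>x. x \<notin> X0 m \<Longrightarrow> \<phi> x = 0"
    and rec: "\<And>x. (\<Sum>\<alpha>\<in>{\<alpha>. \<alpha> \<le> m}. c \<alpha> * f (\<lambda>k. x k + \<alpha> k)) = 0"
    and init: "\<And>x. x \<in> X0 m \<Longrightarrow> f x = \<phi> x"
    and conv: "\<And>z. (\<forall>k. R < norm (z k)) \<Longrightarrow>
                 (\<lambda>x. f x / mpow z (\<lambda>k. x k + 1)) summable_on UNIV"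
  shows "\<forall>z. (\<forall>k. R < norm (z k)) \<longrightarrow>
           Ppoly c m z * genF f z =
           (\<Sum>J\<in>(UNIV :: 'n set set). \<Sum>\<tau>\<in>Gamma m J. Phi \<phi> \<tau> J z * Ptau c m \<tau> z)"
proof (intro allI impI)
  fix z :: "'n \<Rightarrow> complex"
  assume "\<forall>k. R < norm (z k)"
  define h where "h x = \<phi> x / mpow z (\<lambda>k. x k + 1) * Ptau c m x z" for x
  have h_has_sum: "(h has_sum Ppoly c m z * genF f z) UNIV"
    unfolding h_def using \<phi>_ext rec init conv[OF \<open>\<forall>k. R < norm (z k)\<close>]
    by (rule Ppoly_genF_has_sum[where \<phi> = \<phi> and f = f])
  have "infsum h (cone \<tau> J) = Phi \<phi> \<tau> J z * Ptau c m \<tau> z" if "\<tau> \<in> Gamma m J" for \<tau> J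
    unfolding Phi_def cone_def[symmetric] h_def infsum_cmult_left'[symmetric]
    using Ptau_cone[OF that] by (intro infsum_cong) simp
  then have "(\<Sum>J\<in>UNIV. \<Sum>\<tau>\<in>Gamma m J. Phi \<phi> \<tau> J z * Ptau c m \<tau> z)
      = (\<Sum>J\<in>UNIV. \<Sum>\<tau>\<in>Gamma m J. infsum h (cone \<tau> J))"
    by simp
  also have "\<dots> = infsum h UNIV"
    using h_has_sum by (intro sum_infsum_cones) (auto simp: summable_on_def)
  also have "\<dots> = Ppoly c m z * genF f z"
    using h_has_sum by (rule infsumI)
  finally show "Ppoly c m z * genF f z =
      (\<Sum>J\<in>UNIV. \<Sum>\<tau>\<in>Gamma m J. Phi \<phi> \<tau> J z * Ptau c m \<tau> z)"
    by simp
qed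

end
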